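(* Let $P$ be a finite poset and $\alpha:P\to\mathbb{N}$ an isotone map; for $i\in\mathbb{N}$ let $I_i=\alpha^{-1}(\{0,1,\dots,i\})$. Then the principal letterplace ideal $L(\alpha,P)$ is generated by the monomials $m_\phi=\prod_{j=0}^{i}x_{\phi(j),j}$, where $i\in\mathbb{N}$ and $\phi:\{0<1<\dots<i\}\to P$ is an isotone map with $\phi(i)\in I_i$. The minimal generators of $L(\alpha,P)$ are the $m_\phi$ for such $\phi$ which moreover satisfy $\phi(j)\notin I_j$ for all $j<i$.
   Context: $\mathbb{N}=\{0,1,2,\dots\}$; $\mathrm{Hom}(P,\mathbb{N})$ is the set of isotone maps $P\to\mathbb{N}$ ordered pointwise. The ascent of $\psi\in\mathrm{Hom}(P,\mathbb{N})$ is $\Lambda\psi=\{(p,i)\in P\times\mathbb{N}: \psi(q)\le i<\psi(p)\ \forall q<p\}$. $k$ is a field and $k[x_{P\times\mathbb{N}}]$ the polynomial ring in variables $x_{p,i}$; $m_T=\prod_{t\in T}x_t$. For a poset ideal $\mathcal{J}\subseteq\mathrm{Hom}(P,\mathbb{N})$ with complement $\mathcal{J}^c$, the letterplace ideal $L(\mathcal{J},P)$ is generated by $m_{\Lambda\psi}$, $\psi\in\mathcal{J}^c$. For isotone $\alpha$, $\mathcal{J}(\alpha)=\{\psi\in\mathrm{Hom}(P,\mathbb{N}):\psi\le\alpha\}$ and $L(\alpha,P)=L(\mathcal{J}(\alpha),P)$. *)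

theory Defs
  imports Main "HOL-Library.Poly_Mapping"
begin

text \<open>The polynomial ring k[x_V] over a field k in variables indexed by V is
  modelled as maps from V-indexed exponent vectors to coefficients (finitely supported), with the
  convolution product of HOL-Library.Poly_Mapping.\<close>

type_synonym ('v, 'k) mpoly = "('v \<Rightarrow>\<^sub>0 nat) \<Rightarrow>\<^sub>0 'k"

definition var :: "'v \<Rightarrow> ('v, 'k::comm_ring_1) mpoly" where
  "var v = Poly_Mapping.single (Poly_Mapping.single v 1) 1"

definition monom_of_set :: "'v set \<Rightarrow> ('v, 'k::comm_ring_1) mpoly" where
  "monom_of_set T = (\<Prod>t\<in>T. var t)"

definition monomial :: "('v \<Rightarrow>\<^sub>0 nat) \<Rightarrow> ('v, 'k::comm_ring_1) mpoly" where
  "monomial e = Poly_Mapping.single e 1"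

definition ideal_gen :: "'a::comm_ring_1 set \<Rightarrow> 'a set" where
  "ideal_gen S = {f. \<exists>F r. finite F \<and> F \<subseteq> S \<and> f = (\<Sum>s\<in>F. r s * s)}"

definition min_monomial_gens :: "('v, 'k::comm_ring_1) mpoly set \<Rightarrow> ('v, 'k) mpoly set" where
  "min_monomial_gens I = {monomial e | e. monomial e \<in> I \<and>
      (\<forall>e'. monomial e' \<in> I \<and> (\<forall>v. Poly_Mapping.lookup e' v \<le> Poly_Mapping.lookup e v) \<longrightarrow> e' = e)}"

definition ascent :: "('p::order \<Rightarrow> nat) \<Rightarrow> ('p \<times> nat) set" where
  "ascent \<psi> = {(p, i). i < \<psi> p \<and> (\<forall>q. q < p \<longrightarrow> \<psi> q \<le> i)}"

definition letterplace :: "('p::order \<Rightarrow> nat) set \<Rightarrow> ('p \<times> nat, 'k::comm_ring_1) mpoly set" where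
  "letterplace J = ideal_gen {monom_of_set (ascent \<psi>) | \<psi>. mono \<psi> \<and> \<psi> \<notin> J}"

definition principal_J :: "('p::order \<Rightarrow> nat) \<Rightarrow> ('p \<Rightarrow> nat) set" where
  "principal_J \<alpha> = {\<psi>. mono \<psi> \<and> \<psi> \<le> \<alpha>}"

definition principal_letterplace :: "('p::order \<Rightarrow> nat) \<Rightarrow> ('p \<times> nat, 'k::comm_ring_1) mpoly set" where
  "principal_letterplace \<alpha> = letterplace (principal_J \<alpha>)"

definition m_phi :: "nat \<Rightarrow> (nat \<Rightarrow> 'p) \<Rightarrow> ('p \<times> nat, 'k::comm_ring_1) mpoly" where
  "m_phi i \<phi> = (\<Prod>j\<in>{0..i}. var (\<phi> j, j))"

end

theory Submission
  imports Defs "HOL.Modules"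
begin

text \<open>If \<psi> is isotone and \<alpha> p < \<psi> p, then descending from level i = \<alpha> p and picking at
  each level k a minimal q with k < \<psi> q below the point chosen before gives a chain
  \<phi> 0 \<le> \<dots> \<le> \<phi> i \<le> p whose graph lies in the ascent of \<psi>; monotonicity of \<alpha> gives
  \<alpha> (\<phi> i) \<le> i.  Conversely, for a chain with \<alpha> (\<phi> i) \<le> i the map counting, at each point, the chain
  elements below it is isotone, exceeds \<alpha> at \<phi> i, and has its ascent inside the graph of the
  chain.  So the two families of squarefree monomials divide each other and generate the same
  ideal.  Among the chain monomials, the minimal ones are those of chains that cannot be cut off
  at an earlier level j with \<alpha> (\<phi> j) \<le> j.\<close>

interpretation ring_module: module "(*) :: 'a::comm_ring_1 \<Rightarrow> 'a \<Rightarrow> 'a"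
  by unfold_locales (simp_all add: algebra_simps)

lemma ideal_gen_eq_span: "ideal_gen S = ring_module.span S"
  unfolding ideal_gen_def ring_module.span_explicit by blast

lemma ideal_gen_base: "s \<in> S \<Longrightarrow> s \<in> ideal_gen S"
  by (simp add: ideal_gen_eq_span ring_module.span_base)

lemma ideal_gen_eq_if_dvd:
  assumes "\<And>s. s \<in> S \<Longrightarrow> \<exists>t\<in>T. t dvd s" and "\<And>t. t \<in> T \<Longrightarrow> \<exists>s\<in>S. s dvd t"
  shows "ideal_gen S = ideal_gen T"
proof -
  have "A \<subseteq> ring_module.span B" if divisor: "\<And>a. a \<in> A \<Longrightarrow> \<exists>b\<in>B. b dvd a" for A B :: "'a set"
  proof
    fix a assume "a \<in> A"
    then obtain b where "b \<in> B" "b dvd a"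
      using divisor by blast
    from \<open>b dvd a\<close> obtain c where "a = b * c"
      by (rule dvdE)
    then have "a = c * b"
      by (simp add: mult.commute)
    with \<open>b \<in> B\<close> show "a \<in> ring_module.span B"
      by (simp add: ring_module.span_base ring_module.span_scale)
  qed
  then show ?thesis
    using assms by (simp add: ideal_gen_eq_span ring_module.span_eq)
qed

subsection \<open>Monomial ideals\<close>

definition exponent_le :: "('v \<Rightarrow>\<^sub>0 nat) \<Rightarrow> ('v \<Rightarrow>\<^sub>0 nat) \<Rightarrow> bool" (infix "\<unlhd>" 50) where
  "d \<unlhd> e \<longleftrightarrow> (\<forall>v. Poly_Mapping.lookup d v \<le> Poly_Mapping.lookup e v)"

lemma exponent_le_trans: "d \<unlhd> e \<Longrightarrow> e \<unlhd> f \<Longrightarrow> d \<unlhd> f"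
  unfolding exponent_le_def using le_trans by blast

lemma exponent_le_antisym: "d \<unlhd> e \<Longrightarrow> e \<unlhd> d \<Longrightarrow> d = e"
  unfolding exponent_le_def by (simp add: antisym poly_mapping_eqI)

lemma keys_monomial: "Poly_Mapping.keys (monomial e :: ('v, 'k::comm_ring_1) mpoly) = {e}"
  by (simp add: monomial_def)

lemma keys_in_ideal_gen_monomials:
  assumes "f \<in> ideal_gen (monomial ` D :: ('v, 'k::comm_ring_1) mpoly set)"
    and "e \<in> Poly_Mapping.keys f"
  shows "\<exists>d\<in>D. d \<unlhd> e"
proof -
  let ?T = "{f :: ('v, 'k) mpoly. \<forall>e\<in>Poly_Mapping.keys f. \<exists>d\<in>D. d \<unlhd> e}"
  have "ring_module.subspace ?T"
  proof (rule ring_module.subspaceI)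
    fix x y assume "x \<in> ?T" "y \<in> ?T"
    then show "x + y \<in> ?T"
      using keys_add[of x y] by blast
  next
    fix c x assume x: "x \<in> ?T"
    show "c * x \<in> ?T"
    proof (intro CollectI ballI)
      fix e assume "e \<in> Poly_Mapping.keys (c * x)"
      then obtain a b where e: "e = a + b" and "b \<in> Poly_Mapping.keys x"
        using keys_mult[of c x] by blast
      with x obtain d where "d \<in> D" "d \<unlhd> b"
        by blast
      moreover have "b \<unlhd> e"
        unfolding e exponent_le_def by (simp add: lookup_add)
      ultimately show "\<exists>d\<in>D. d \<unlhd> e"
        by (meson exponent_le_trans)
    qed
  qed simp
  moreover have "monomial ` D \<subseteq> ?T"
    by (auto simp: keys_monomial exponent_le_def)
  ultimately have "ideal_gen (monomial ` D) \<subseteq> ?T"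
    unfolding ideal_gen_eq_span by (rule ring_module.span_minimal[rotated])
  with assms show ?thesis by blast
qed

lemma min_monomial_gens_ideal_gen:
  "min_monomial_gens (ideal_gen (monomial ` D) :: ('v, 'k::comm_ring_1) mpoly set) =
     monomial ` {d \<in> D. \<forall>d'\<in>D. d' \<unlhd> d \<longrightarrow> d' = d}"
  (is "min_monomial_gens ?I = _")
proof (intro set_eqI iffI)
  fix x :: "('v, 'k) mpoly"
  assume "x \<in> min_monomial_gens ?I"
  then obtain e where x: "x = monomial e" "monomial e \<in> ?I"
    and min: "\<And>e'. monomial e' \<in> ?I \<Longrightarrow> e' \<unlhd> e \<Longrightarrow> e' = e"
    unfolding min_monomial_gens_def exponent_le_def by blast
  obtain d where "d \<in> D" "d \<unlhd> e"
    using keys_in_ideal_gen_monomials[OF x(2)] by (auto simp: keys_monomial)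
  moreover have "d' = e" if "d' \<in> D" "d' \<unlhd> e" for d'
    using min that by (simp add: ideal_gen_base)
  ultimately show "x \<in> monomial ` {d \<in> D. \<forall>d'\<in>D. d' \<unlhd> d \<longrightarrow> d' = d}"
    using x(1) by blast
next
  fix x :: "('v, 'k) mpoly" assume "x \<in> monomial ` {d \<in> D. \<forall>d'\<in>D. d' \<unlhd> d \<longrightarrow> d' = d}"
  then obtain d where x: "x = monomial d" "d \<in> D" and min: "\<And>d'. d' \<in> D \<Longrightarrow> d' \<unlhd> d \<Longrightarrow> d' = d"
    by blast
  have "e = d" if e: "monomial e \<in> ?I" "e \<unlhd> d" for e
  proof -
    obtain d' where "d' \<in> D" "d' \<unlhd> e"
      using keys_in_ideal_gen_monomials[OF e(1)] by (auto simp: keys_monomial)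
    with e(2) min have "d \<unlhd> e"
      by (metis exponent_le_trans)
    with e(2) show ?thesis by (rule exponent_le_antisym)
  qed
  then show "x \<in> min_monomial_gens ?I"
    unfolding min_monomial_gens_def exponent_le_def[symmetric] using x by (auto intro: ideal_gen_base)
qed

definition set_exponent :: "'v set \<Rightarrow> ('v \<Rightarrow>\<^sub>0 nat)" where
  "set_exponent T = (\<Sum>t\<in>T. Poly_Mapping.single t 1)"

lemma lookup_set_exponent: "finite T \<Longrightarrow> Poly_Mapping.lookup (set_exponent T) v = of_bool (v \<in> T)"
  by (simp add: set_exponent_def lookup_sum lookup_single when_def)

lemma set_exponent_le_iff: "finite A \<Longrightarrow> finite B \<Longrightarrow> set_exponent A \<unlhd> set_exponent B \<longleftrightarrow> A \<subseteq> B"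
  by (auto simp: exponent_le_def lookup_set_exponent)

lemma monom_of_set_eq_monomial:
  "finite T \<Longrightarrow> (monom_of_set T :: ('v, 'k::comm_ring_1) mpoly) = monomial (set_exponent T)"
  unfolding monom_of_set_def set_exponent_def monomial_def
  by (induction T rule: finite_induct) (simp_all add: var_def mult_single)

lemma monom_of_set_dvd: "finite B \<Longrightarrow> A \<subseteq> B \<Longrightarrow> monom_of_set A dvd monom_of_set B"
  unfolding monom_of_set_def by (metis dvdI mult.commute prod.subset_diff)

lemma min_monomial_gens_ideal_gen_squarefree:
  assumes "\<And>A. A \<in> \<A> \<Longrightarrow> finite A"
  shows "min_monomial_gens (ideal_gen (monom_of_set ` \<A>) :: ('v, 'k::comm_ring_1) mpoly set) =
    monom_of_set ` {A \<in> \<A>. \<forall>B\<in>\<A>. B \<subseteq> A \<longrightarrow> B = A}"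
proof -
  have monoms: "(monom_of_set ` \<B> :: ('v, 'k) mpoly set) = monomial ` set_exponent ` \<B>"
    if "\<B> \<subseteq> \<A>" for \<B>
    unfolding image_image using that assms by (intro image_cong) (auto simp: monom_of_set_eq_monomial)
  have le_iff: "set_exponent B \<unlhd> set_exponent A \<longleftrightarrow> B \<subseteq> A" if "A \<in> \<A>" "B \<in> \<A>" for A B
    using that assms by (simp add: set_exponent_le_iff)
  have eq_iff: "set_exponent B = set_exponent A \<longleftrightarrow> B = A" if "A \<in> \<A>" "B \<in> \<A>" for A B
  proof
    assume "set_exponent B = set_exponent A"
    then have "B \<subseteq> A" "A \<subseteq> B"
      using le_iff[OF that] le_iff[OF that(2,1)] by (simp_all add: exponent_le_def)
    then show "B = A" ..
  qed simp
  have "{d \<in> set_exponent ` \<A>. \<forall>d'\<in>set_exponent ` \<A>. d' \<unlhd> d \<longrightarrow> d' = d} =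
      set_exponent ` {A \<in> \<A>. \<forall>B\<in>\<A>. set_exponent B \<unlhd> set_exponent A \<longrightarrow> set_exponent B = set_exponent A}"
    by blast
  also have "\<dots> = set_exponent ` {A \<in> \<A>. \<forall>B\<in>\<A>. B \<subseteq> A \<longrightarrow> B = A}"
    by (auto simp: le_iff eq_iff)
  finally show ?thesis
    by (simp add: monoms min_monomial_gens_ideal_gen)
qed

subsection \<open>Chains and ascents\<close>

definition graph_upto :: "nat \<Rightarrow> (nat \<Rightarrow> 'p) \<Rightarrow> ('p \<times> nat) set" where
  "graph_upto i \<phi> = (\<lambda>j. (\<phi> j, j)) ` {0..i}"

lemma finite_graph_upto [simp]: "finite (graph_upto i \<phi>)"
  by (simp add: graph_upto_def)

lemma graph_upto_subset_iff:
  "graph_upto i \<phi> \<subseteq> graph_upto i' \<phi>' \<longleftrightarrow> i \<le> i' \<and> (\<forall>j\<le>i. \<phi> j = \<phi>' j)"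
  by (auto simp: graph_upto_def image_subset_iff)

lemma graph_upto_cong: "(\<And>j. j \<le> i \<Longrightarrow> \<phi> j = \<phi>' j) \<Longrightarrow> graph_upto i \<phi> = graph_upto i \<phi>'"
  unfolding graph_upto_def by (auto intro: image_cong)

lemma graph_upto_Suc: "graph_upto (Suc i) \<phi> = insert (\<phi> (Suc i), Suc i) (graph_upto i \<phi>)"
  by (simp add: graph_upto_def atLeast0_atMost_Suc)

lemma m_phi_eq_monom_of_set: "m_phi i \<phi> = monom_of_set (graph_upto i \<phi>)"
  unfolding m_phi_def monom_of_set_def graph_upto_def
  by (subst prod.reindex) (auto simp: inj_on_def)

lemma finite_ascent [simp]: "finite (ascent (\<psi> :: 'p::{order,finite} \<Rightarrow> nat))"
proof -
  have "ascent \<psi> \<subseteq> UNIV \<times> {..<Max (range \<psi>)}"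
    by (auto simp: ascent_def intro: order.strict_trans2)
  then show ?thesis by (rule finite_subset) simp
qed

lemma ascent_below:
  fixes \<psi> :: "'p::{order,finite} \<Rightarrow> nat"
  assumes "k < \<psi> r"
  shows "\<exists>m\<le>r. (m, k) \<in> ascent \<psi>"
proof -
  obtain m where m: "m \<le> r" "k < \<psi> m" and min: "\<And>q. k < \<psi> q \<Longrightarrow> q \<le> m \<Longrightarrow> m = q"
    using finite_has_minimal2[of "{q. k < \<psi> q}" r] assms by auto
  have "\<psi> q \<le> k" if "q < m" for q
    using min[of q] that by (metis not_le order_less_imp_le order_less_irrefl)
  with m show ?thesis by (auto simp: ascent_def)
qed

lemma monotone_on_atMost_Suc_upd:
  fixes \<phi> :: "nat \<Rightarrow> 'p::order"
  assumes mono: "monotone_on {0..k} (\<le>) (\<le>) \<phi>" and "\<phi> k \<le> m"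
  shows "monotone_on {0..Suc k} (\<le>) (\<le>) (\<phi>(Suc k := m))"
proof (rule monotone_onI)
  have below_m: "\<phi> j \<le> m" if "j \<le> k" for j
  proof -
    have "\<phi> j \<le> \<phi> k"
      using monotone_onD[OF mono] that by simp
    then show ?thesis
      using \<open>\<phi> k \<le> m\<close> by (rule order_trans)
  qed
  fix a b :: nat assume "a \<in> {0..Suc k}" "b \<in> {0..Suc k}" "a \<le> b"
  then consider "b = Suc k" "a = Suc k" | "b = Suc k" "a \<le> k" | "a \<le> k" "b \<le> k"
    by fastforce
  then show "(\<phi>(Suc k := m)) a \<le> (\<phi>(Suc k := m)) b"
  proof cases
    case 3
    with \<open>a \<le> b\<close> show ?thesis
      using monotone_onD[OF mono, of a b] by simp
  qed (simp_all add: below_m)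
qed

lemma chain_in_ascent:
  fixes \<psi> :: "'p::{order,finite} \<Rightarrow> nat"
  assumes "k < \<psi> q"
  shows "\<exists>\<phi>. monotone_on {0..k} (\<le>) (\<le>) \<phi> \<and> \<phi> k \<le> q \<and> graph_upto k \<phi> \<subseteq> ascent \<psi>"
  using assms
proof (induction k arbitrary: q)
  case 0
  then obtain m where "m \<le> q" "(m, 0) \<in> ascent \<psi>"
    using ascent_below by blast
  then show ?case
    by (intro exI[of _ "\<lambda>_. m"]) (auto simp: graph_upto_def monotone_on_def)
next
  case (Suc k)
  then obtain m where m: "m \<le> q" "(m, Suc k) \<in> ascent \<psi>"
    using ascent_below by blast
  then have "k < \<psi> m"
    by (simp add: ascent_def)
  then obtain \<phi> where \<phi>: "monotone_on {0..k} (\<le>) (\<le>) \<phi>" "\<phi> k \<le> m" "graph_upto k \<phi> \<subseteq> ascent \<psi>"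
    using Suc.IH by blast
  let ?\<phi> = "\<phi>(Suc k := m)"
  have "graph_upto k ?\<phi> = graph_upto k \<phi>"
    by (rule graph_upto_cong) simp
  then have "graph_upto (Suc k) ?\<phi> = insert (m, Suc k) (graph_upto k \<phi>)"
    by (simp add: graph_upto_Suc)
  then have "graph_upto (Suc k) ?\<phi> \<subseteq> ascent \<psi>"
    using \<phi>(3) m(2) by simp
  moreover have "monotone_on {0..Suc k} (\<le>) (\<le>) ?\<phi>"
    using \<phi>(1,2) by (rule monotone_on_atMost_Suc_upd)
  moreover have "?\<phi> (Suc k) \<le> q"
    using m(1) by simp
  ultimately show ?case
    by blast
qed

definition chain_rank :: "nat \<Rightarrow> (nat \<Rightarrow> 'p::order) \<Rightarrow> 'p \<Rightarrow> nat" where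
  "chain_rank i \<phi> p = card {j. j \<le> i \<and> \<phi> j \<le> p}"

lemma finite_chain_rank_set: "finite {j::nat. j \<le> i \<and> \<phi> j \<le> p}"
  by (rule finite_subset[of _ "{..i}"]) auto

lemma mono_chain_rank:
  fixes \<phi> :: "nat \<Rightarrow> 'p::order"
  shows "mono (chain_rank i \<phi>)"
proof
  fix p q :: 'p assume "p \<le> q"
  then have "{j. j \<le> i \<and> \<phi> j \<le> p} \<subseteq> {j. j \<le> i \<and> \<phi> j \<le> q}"
    by (blast intro: order_trans)
  then show "chain_rank i \<phi> p \<le> chain_rank i \<phi> q"
    unfolding chain_rank_def by (rule card_mono[OF finite_chain_rank_set])
qed

context
  fixes i :: nat and \<phi> :: "nat \<Rightarrow> 'p::order"
  assumes chain: "monotone_on {0..i} (\<le>) (\<le>) \<phi>"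
begin

lemma chain_le: "j \<le> j' \<Longrightarrow> j' \<le> i \<Longrightarrow> \<phi> j \<le> \<phi> j'"
  using chain by (simp add: monotone_on_def)

lemma Suc_le_chain_rank: "k \<le> i \<Longrightarrow> Suc k \<le> chain_rank i \<phi> (\<phi> k)"
proof -
  assume "k \<le> i"
  then have "{0..k} \<subseteq> {j. j \<le> i \<and> \<phi> j \<le> \<phi> k}"
    using chain_le by auto
  then have "card {0..k} \<le> chain_rank i \<phi> (\<phi> k)"
    unfolding chain_rank_def by (rule card_mono[OF finite_chain_rank_set])
  then show ?thesis
    by simp
qed

lemma less_chain_rankD: "k < chain_rank i \<phi> p \<Longrightarrow> k \<le> i \<and> \<phi> k \<le> p"
proof (rule ccontr)
  assume k: "k < chain_rank i \<phi> p" and not_below: "\<not> (k \<le> i \<and> \<phi> k \<le> p)"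
  have "j < k" if "j \<le> i" "\<phi> j \<le> p" for j
  proof (rule ccontr)
    assume "\<not> j < k"
    then have "\<phi> k \<le> \<phi> j"
      using chain_le \<open>j \<le> i\<close> by simp
    with not_below \<open>\<not> j < k\<close> that show False
      using order_trans by fastforce
  qed
  then have "{j. j \<le> i \<and> \<phi> j \<le> p} \<subseteq> {..<k}"
    by blast
  then have "chain_rank i \<phi> p \<le> card {..<k}"
    unfolding chain_rank_def by (rule card_mono[OF finite_lessThan])
  with k show False
    by simp
qed

lemma ascent_chain_rank_subset: "ascent (chain_rank i \<phi>) \<subseteq> graph_upto i \<phi>"
proof
  fix x assume "x \<in> ascent (chain_rank i \<phi>)"
  then obtain p k where x: "x = (p, k)" "k < chain_rank i \<phi> p"
    and below: "\<And>q. q < p \<Longrightarrow> chain_rank i \<phi> q \<le> k"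
    by (auto simp: ascent_def)
  then have k: "k \<le> i" "\<phi> k \<le> p"
    using less_chain_rankD by auto
  have "\<phi> k = p"
    using Suc_le_chain_rank[OF k(1)] below[of "\<phi> k"] k(2) by (auto simp: order.strict_iff_order)
  with x k show "x \<in> graph_upto i \<phi>"
    by (auto simp: graph_upto_def)
qed

end

subsection \<open>Admissible chains\<close>

definition admissible_chain :: "('p::order \<Rightarrow> nat) \<Rightarrow> nat \<Rightarrow> (nat \<Rightarrow> 'p) \<Rightarrow> bool" where
  "admissible_chain \<alpha> i \<phi> \<longleftrightarrow> monotone_on {0..i} (\<le>) (\<le>) \<phi> \<and> \<alpha> (\<phi> i) \<le> i"

lemma admissible_chain_in_ascent:
  fixes \<alpha> \<psi> :: "'p::{order,finite} \<Rightarrow> nat"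
  assumes "mono \<alpha>" and "\<not> \<psi> \<le> \<alpha>"
  shows "\<exists>i \<phi>. admissible_chain \<alpha> i \<phi> \<and> graph_upto i \<phi> \<subseteq> ascent \<psi>"
proof -
  obtain p where p: "\<alpha> p < \<psi> p"
    using assms(2) by (auto simp: le_fun_def not_le)
  then obtain \<phi> where \<phi>: "monotone_on {0..\<alpha> p} (\<le>) (\<le>) \<phi>" "\<phi> (\<alpha> p) \<le> p"
    "graph_upto (\<alpha> p) \<phi> \<subseteq> ascent \<psi>"
    using chain_in_ascent by blast
  then have "admissible_chain \<alpha> (\<alpha> p) \<phi>"
    using assms(1) by (simp add: admissible_chain_def monoD)
  with \<phi>(3) show ?thesis by blast
qed

lemma ascent_in_admissible_chain:
  assumes "admissible_chain \<alpha> i \<phi>"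
  shows "\<exists>\<psi>. mono \<psi> \<and> \<not> \<psi> \<le> \<alpha> \<and> ascent \<psi> \<subseteq> graph_upto i \<phi>"
proof -
  have chain: "monotone_on {0..i} (\<le>) (\<le>) \<phi>" and "\<alpha> (\<phi> i) < chain_rank i \<phi> (\<phi> i)"
    using assms Suc_le_chain_rank[of i \<phi> i] by (auto simp: admissible_chain_def)
  then have "\<not> chain_rank i \<phi> \<le> \<alpha>"
    by (auto simp: le_fun_def not_le)
  then show ?thesis
    using mono_chain_rank ascent_chain_rank_subset[OF chain] by blast
qed

definition admissible_chain_graphs :: "('p::order \<Rightarrow> nat) \<Rightarrow> ('p \<times> nat) set set" where
  "admissible_chain_graphs \<alpha> = {graph_upto i \<phi> | i \<phi>. admissible_chain \<alpha> i \<phi>}"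

lemma finite_admissible_chain_graph: "A \<in> admissible_chain_graphs \<alpha> \<Longrightarrow> finite A"
  by (auto simp: admissible_chain_graphs_def)

lemma principal_letterplace_eq_ideal_gen_chains:
  fixes \<alpha> :: "'p::{order,finite} \<Rightarrow> nat"
  assumes "mono \<alpha>"
  shows "(principal_letterplace \<alpha> :: ('p \<times> nat, 'k::comm_ring_1) mpoly set) =
    ideal_gen (monom_of_set ` admissible_chain_graphs \<alpha>)"
  unfolding principal_letterplace_def letterplace_def
proof (rule ideal_gen_eq_if_dvd)
  fix s :: "('p \<times> nat, 'k) mpoly"
  assume "s \<in> {monom_of_set (ascent \<psi>) | \<psi>. mono \<psi> \<and> \<psi> \<notin> principal_J \<alpha>}"
  then obtain \<psi> where s: "s = monom_of_set (ascent \<psi>)" and "\<not> \<psi> \<le> \<alpha>"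
    by (auto simp: principal_J_def)
  then obtain i \<phi> where "admissible_chain \<alpha> i \<phi>" "graph_upto i \<phi> \<subseteq> ascent \<psi>"
    using admissible_chain_in_ascent[OF assms] by blast
  then show "\<exists>t\<in>monom_of_set ` admissible_chain_graphs \<alpha>. t dvd s"
    unfolding s admissible_chain_graphs_def by (blast intro: monom_of_set_dvd[OF finite_ascent])
next
  fix t :: "('p \<times> nat, 'k) mpoly"
  assume "t \<in> monom_of_set ` admissible_chain_graphs \<alpha>"
  then obtain i \<phi> where t: "t = monom_of_set (graph_upto i \<phi>)" and "admissible_chain \<alpha> i \<phi>"
    by (auto simp: admissible_chain_graphs_def)
  then obtain \<psi> where "mono \<psi>" "\<not> \<psi> \<le> \<alpha>" "ascent \<psi> \<subseteq> graph_upto i \<phi>"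
    using ascent_in_admissible_chain by blast
  then show "\<exists>s\<in>{monom_of_set (ascent \<psi>) | \<psi>. mono \<psi> \<and> \<psi> \<notin> principal_J \<alpha>}. s dvd t"
    unfolding t principal_J_def by (blast intro: monom_of_set_dvd[OF finite_graph_upto])
qed

lemma admissible_chain_truncate:
  "admissible_chain \<alpha> i \<phi> \<Longrightarrow> j \<le> i \<Longrightarrow> \<alpha> (\<phi> j) \<le> j \<Longrightarrow> admissible_chain \<alpha> j \<phi>"
  by (auto simp: admissible_chain_def intro: monotone_on_subset)

lemma admissible_chain_graph_subset_imp_eq:
  assumes "admissible_chain \<alpha> i' \<phi>'" and "graph_upto i' \<phi>' \<subseteq> graph_upto i \<phi>"
    and uncut: "\<And>j. j < i \<Longrightarrow> j < \<alpha> (\<phi> j)"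
  shows "graph_upto i' \<phi>' = graph_upto i \<phi>"
proof -
  from assms(2) have agree: "i' \<le> i" "\<And>j. j \<le> i' \<Longrightarrow> \<phi>' j = \<phi> j"
    by (auto simp: graph_upto_subset_iff)
  have "i' = i"
  proof (rule ccontr)
    assume "i' \<noteq> i"
    with agree have "i' < \<alpha> (\<phi>' i')"
      using uncut[of i'] by simp
    with assms(1) show False
      by (simp add: admissible_chain_def)
  qed
  moreover have "graph_upto i' \<phi>' = graph_upto i' \<phi>"
    by (rule graph_upto_cong) (simp add: agree(2))
  ultimately show ?thesis
    by simp
qed

lemma minimal_admissible_chain_graphs:
  "{A \<in> admissible_chain_graphs \<alpha>. \<forall>B\<in>admissible_chain_graphs \<alpha>. B \<subseteq> A \<longrightarrow> B = A} =
    {graph_upto i \<phi> | i \<phi>. admissible_chain \<alpha> i \<phi> \<and> (\<forall>j<i. j < \<alpha> (\<phi> j))}"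
proof (intro set_eqI iffI)
  fix A assume "A \<in> {A \<in> admissible_chain_graphs \<alpha>. \<forall>B\<in>admissible_chain_graphs \<alpha>. B \<subseteq> A \<longrightarrow> B = A}"
  then have "A \<in> admissible_chain_graphs \<alpha>"
    and min: "\<And>B. B \<in> admissible_chain_graphs \<alpha> \<Longrightarrow> B \<subseteq> A \<Longrightarrow> B = A"
    by auto
  then obtain i \<phi> where A: "A = graph_upto i \<phi>" and adm: "admissible_chain \<alpha> i \<phi>"
    by (auto simp: admissible_chain_graphs_def)
  have "j < \<alpha> (\<phi> j)" if "j < i" for j
  proof (rule ccontr)
    assume "\<not> j < \<alpha> (\<phi> j)"
    with adm \<open>j < i\<close> have "admissible_chain \<alpha> j \<phi>"
      by (simp add: admissible_chain_truncate)
    then have "graph_upto j \<phi> \<in> admissible_chain_graphs \<alpha>"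
      unfolding admissible_chain_graphs_def by blast
    moreover have "graph_upto j \<phi> \<subseteq> A"
      using \<open>j < i\<close> by (simp add: A graph_upto_subset_iff)
    ultimately have "graph_upto i \<phi> \<subseteq> graph_upto j \<phi>"
      using min A by blast
    with \<open>j < i\<close> show False
      by (simp add: graph_upto_subset_iff)
  qed
  with A adm show "A \<in> {graph_upto i \<phi> | i \<phi>. admissible_chain \<alpha> i \<phi> \<and> (\<forall>j<i. j < \<alpha> (\<phi> j))}"
    by blast
next
  fix A assume "A \<in> {graph_upto i \<phi> | i \<phi>. admissible_chain \<alpha> i \<phi> \<and> (\<forall>j<i. j < \<alpha> (\<phi> j))}"
  then obtain i \<phi> where A: "A = graph_upto i \<phi>" and adm: "admissible_chain \<alpha> i \<phi>"
    and uncut: "\<And>j. j < i \<Longrightarrow> j < \<alpha> (\<phi> j)"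
    by blast
  have "B = A" if "B \<in> admissible_chain_graphs \<alpha>" and "B \<subseteq> A" for B
  proof -
    obtain i' \<phi>' where B: "B = graph_upto i' \<phi>'" and adm': "admissible_chain \<alpha> i' \<phi>'"
      using \<open>B \<in> admissible_chain_graphs \<alpha>\<close> by (auto simp: admissible_chain_graphs_def)
    from adm' \<open>B \<subseteq> A\<close> uncut show ?thesis
      unfolding A B by (rule admissible_chain_graph_subset_imp_eq)
  qed
  moreover have "A \<in> admissible_chain_graphs \<alpha>"
    using A adm unfolding admissible_chain_graphs_def by blast
  ultimately show "A \<in> {A \<in> admissible_chain_graphs \<alpha>. \<forall>B\<in>admissible_chain_graphs \<alpha>. B \<subseteq> A \<longrightarrow> B = A}"
    by blast
qed

theorem theorem4p7:
  fixes \<alpha> :: "'p::{order, finite} \<Rightarrow> nat"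
  assumes "mono \<alpha>"
  defines "I \<equiv> (\<lambda>i::nat. {p. \<alpha> p \<le> i})"
  shows "(principal_letterplace \<alpha> :: ('p \<times> nat, 'k::field) mpoly set) =
           ideal_gen {m_phi i \<phi> | i \<phi>. monotone_on {0..i} (\<le>) (\<le>) \<phi> \<and> \<phi> i \<in> I i} \<and>
         min_monomial_gens (principal_letterplace \<alpha> :: ('p \<times> nat, 'k::field) mpoly set) =
           {m_phi i \<phi> | i \<phi>. monotone_on {0..i} (\<le>) (\<le>) \<phi> \<and> \<phi> i \<in> I i
               \<and> (\<forall>j<i. \<phi> j \<notin> I j)}"
proof -
  have gens: "{m_phi i \<phi> | i \<phi>. monotone_on {0..i} (\<le>) (\<le>) \<phi> \<and> \<phi> i \<in> I i} =
      (monom_of_set ` admissible_chain_graphs \<alpha> :: ('p \<times> nat, 'k) mpoly set)"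
    by (auto simp: I_def admissible_chain_graphs_def admissible_chain_def m_phi_eq_monom_of_set)
  have min_gens: "{m_phi i \<phi> | i \<phi>. monotone_on {0..i} (\<le>) (\<le>) \<phi> \<and> \<phi> i \<in> I i \<and> (\<forall>j<i. \<phi> j \<notin> I j)} =
      (monom_of_set ` {graph_upto i \<phi> | i \<phi>. admissible_chain \<alpha> i \<phi> \<and> (\<forall>j<i. j < \<alpha> (\<phi> j))}
        :: ('p \<times> nat, 'k) mpoly set)"
    by (auto simp: I_def admissible_chain_def m_phi_eq_monom_of_set not_le)
  have letterplace: "(principal_letterplace \<alpha> :: ('p \<times> nat, 'k) mpoly set) =
      ideal_gen (monom_of_set ` admissible_chain_graphs \<alpha>)"
    by (rule principal_letterplace_eq_ideal_gen_chains[OF assms(1)])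
  have "min_monomial_gens (ideal_gen (monom_of_set ` admissible_chain_graphs \<alpha>) :: ('p \<times> nat, 'k) mpoly set) =
      monom_of_set ` {graph_upto i \<phi> | i \<phi>. admissible_chain \<alpha> i \<phi> \<and> (\<forall>j<i. j < \<alpha> (\<phi> j))}"
    unfolding minimal_admissible_chain_graphs[symmetric]
    by (rule min_monomial_gens_ideal_gen_squarefree) (rule finite_admissible_chain_graph)
  then show ?thesis
    unfolding gens min_gens letterplace by simp
qed

end
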